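(* Let $f(X)=AX+\frac{C}{X}$. Suppose there exist nonzero integers $A,C$ and a nonzero rational number $z$ such that the quartic curve \[C_4:\ v^2=-4A^3Cz^4y^4+(A^4z^8+4A^3Cz^6-2A^2C^2z^4+4AC^3z^2+C^4)y^2-4AC^3z^4\] has infinitely many rational points $(y,v)$. Then the equation $f(x)f(y)=f(z)^2$ has infinitely many nontrivial rational solutions $(x,y,z)$.
   Context: A solution $(x,y,z)$ (with $x,y,z$ nonzero rationals, so that $f$ is defined) of $f(x)f(y)=f(z)^2$ is called nontrivial if $f(x)\neq f(y)$ and $f(z)\neq 0$. *)

theory Defs
  imports Complex_Main
begin

definition fAC :: "int \<Rightarrow> int \<Rightarrow> rat \<Rightarrow> rat" where
  "fAC A C X = of_int A * X + of_int C / X"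

definition quartic_points :: "int \<Rightarrow> int \<Rightarrow> rat \<Rightarrow> (rat \<times> rat) set" where
  "quartic_points A C z = {(y, v). let a = (of_int A :: rat); c = (of_int C :: rat) in
     v^2 = - 4 * a^3 * c * z^4 * y^4
           + (a^4 * z^8 + 4 * a^3 * c * z^6 - 2 * a^2 * c^2 * z^4 + 4 * a * c^3 * z^2 + c^4) * y^2
           - 4 * a * c^3 * z^4}"

definition nontrivial_solutions :: "int \<Rightarrow> int \<Rightarrow> (rat \<times> rat \<times> rat) set" where
  "nontrivial_solutions A C = {(x, y, z). x \<noteq> 0 \<and> y \<noteq> 0 \<and> z \<noteq> 0 \<and>
     fAC A C x * fAC A C y = (fAC A C z)^2 \<and> fAC A C x \<noteq> fAC A C y \<and> fAC A C z \<noteq> 0}"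

end

theory Submission
  imports Defs "HOL-Computational_Algebra.Polynomial"
begin

text \<open>
  If \<open>f(z) \<noteq> 0\<close>, a solution with given \<open>y\<close> needs \<open>f(x) = t\<close> for \<open>t = f(z)\<^sup>2 / f(y)\<close>, i.e. a
  rational root of \<open>A x\<^sup>2 - t x + C\<close>, which exists iff \<open>t\<^sup>2 - 4AC\<close> is a rational square.
  For this \<open>t\<close> the discriminant is the right-hand side of \<open>C\<^sub>4\<close> divided by the square
  \<open>(z\<^sup>2 y f(y))\<^sup>2\<close>, so the infinitely many \<open>y\<close>-coordinates of rational points of \<open>C\<^sub>4\<close>
  (each occurs at most twice) give infinitely many solutions; finitely many \<open>y\<close> with
  \<open>f(y) \<in> {0, f(z), -f(z)}\<close> are discarded to make them nontrivial.

  If \<open>f(z) = 0\<close>, i.e. \<open>C = -A z\<^sup>2\<close>, the curve \<open>C\<^sub>4\<close> is of no use, but \<open>f(z t) = A z g(t)\<close>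
  with \<open>g(t) = t - 1/t\<close>, so nontrivial solutions for \<open>g\<close> scale to ones for \<open>f\<close>. The same
  discriminant argument for \<open>g\<close> with third coordinate \<open>7/3\<close> needs infinitely many rational
  points on \<open>R\<^sup>2 = 4u\<^sup>4 + ((40/21)\<^sup>4 - 8) u\<^sup>2 + 4\<close>. This quartic is a model of the elliptic
  curve \<open>W\<^sup>2 = (Z - 2K)(Z + 2K)(Z + D)\<close> with \<open>K = 21\<^sup>4\<close>, which has a point whose
  \<open>Z\<close>-coordinate has 2-adic valuation \<open>-2\<close>; each tangent doubling lowers this valuation
  by \<open>2\<close>, so the iterated doublings are pairwise distinct.
\<close>

lemma fAC_zero [simp]: "fAC A C 0 = 0"
  by (simp add: fAC_def)

lemma fAC_eq_iff:
  assumes "x \<noteq> 0"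
  shows "fAC A C x = t \<longleftrightarrow> of_int A * x^2 - t * x + of_int C = 0"
  using assms by (auto simp: fAC_def field_simps power2_eq_square)

lemma fAC_root:
  fixes d t :: rat
  assumes "A \<noteq> 0" and "C \<noteq> 0" and disc: "d^2 = t^2 - 4 * of_int A * of_int C"
  defines "x \<equiv> (t + d) / (2 * of_int A)"
  shows "x \<noteq> 0" and "fAC A C x = t"
proof -
  have "of_int A * x^2 - t * x + of_int C = (d^2 - (t^2 - 4 * of_int A * of_int C)) / (4 * of_int A)"
    using assms(1) unfolding x_def by (simp add: field_simps power2_eq_square)
  then have root: "of_int A * x^2 - t * x + of_int C = 0"
    using disc by simp
  then show "x \<noteq> 0" using assms(2) by auto
  with root show "fAC A C x = t" by (simp add: fAC_eq_iff)
qed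

lemma finite_fAC_fiber:
  assumes "A \<noteq> 0"
  shows "finite {x. fAC A C x = r}"
proof -
  have "{x. fAC A C x = r} \<subseteq> insert 0 {x. poly [:of_int C, -r, of_int A:] x = 0}"
  proof
    fix x assume "x \<in> {x. fAC A C x = r}"
    then show "x \<in> insert 0 {x. poly [:of_int C, -r, of_int A:] x = 0}"
      using fAC_eq_iff[of x A C r] by (cases "x = 0") (auto simp: algebra_simps power2_eq_square)
  qed
  moreover have "[:of_int C, -r, of_int A:] \<noteq> 0" using assms by simp
  ultimately show ?thesis using poly_roots_finite finite_subset by blast
qed

lemma finite_square_roots: "finite {v :: 'a :: idom. v^2 = k}"
proof (cases "\<exists>w. w^2 = k")
  case True
  then obtain w where "w^2 = k" by blast
  then have "{v. v^2 = k} = {w, -w}" by (auto simp: power2_eq_iff)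
  then show ?thesis by simp
qed simp

lemma infinite_fst_image:
  assumes "infinite S" and "\<And>y. finite {v. (y, v) \<in> S}"
  shows "infinite (fst ` S)"
proof
  assume "finite (fst ` S)"
  moreover have "S \<subseteq> (\<Union>y\<in>fst ` S. {y} \<times> {v. (y, v) \<in> S})" by force
  moreover have "finite (\<Union>y\<in>fst ` S. {y} \<times> {v. (y, v) \<in> S})"
    using \<open>finite (fst ` S)\<close> assms(2) by blast
  ultimately show False using assms(1) finite_subset by blast
qed

lemma nontrivial_solutionI:
  assumes "x \<noteq> 0" and "y \<noteq> 0" and "z \<noteq> 0" and "fAC A C z \<noteq> 0"
    and fx: "fAC A C x = (fAC A C z)^2 / fAC A C y"
    and fy: "fAC A C y \<notin> {0, fAC A C z, - fAC A C z}"
  shows "(x, y, z) \<in> nontrivial_solutions A C"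
proof -
  have prod: "fAC A C x * fAC A C y = (fAC A C z)^2" using fx fy by simp
  have "fAC A C x \<noteq> fAC A C y"
  proof
    assume "fAC A C x = fAC A C y"
    with prod have "(fAC A C y)^2 = (fAC A C z)^2" by (simp add: power2_eq_square)
    with fy show False by (simp add: power2_eq_iff)
  qed
  with prod assms(1-4) show ?thesis by (simp add: nontrivial_solutions_def)
qed

lemma quartic_points_discriminant:
  assumes "(y, v) \<in> quartic_points A C z" and "y \<noteq> 0" and "z \<noteq> 0" and "fAC A C y \<noteq> 0"
  shows "(v / (z^2 * y * fAC A C y))^2
           = ((fAC A C z)^2 / fAC A C y)^2 - 4 * of_int A * of_int C"
proof -
  define a :: rat where "a = of_int A"
  define c :: rat where "c = of_int C"
  define D where "D = z^2 * (a * y^2 + c)"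
  have fy: "fAC A C y = (a * y^2 + c) / y" and fz: "fAC A C z = (a * z^2 + c) / z"
    using assms(2,3) by (simp_all add: fAC_def a_def c_def field_simps power2_eq_square)
  have "a * y^2 + c \<noteq> 0" using assms(4) fy by auto
  then have D0: "D \<noteq> 0" using assms(3) by (simp add: D_def)
  have den: "z^2 * y * fAC A C y = D"
    using assms(2) by (simp add: fy D_def)
  have t: "(fAC A C z)^2 / fAC A C y = (a * z^2 + c)^2 * y / D"
    by (simp add: fy fz D_def power_divide)
  have "v^2 = - 4 * a^3 * c * z^4 * y^4
      + (a^4 * z^8 + 4 * a^3 * c * z^6 - 2 * a^2 * c^2 * z^4 + 4 * a * c^3 * z^2 + c^4) * y^2
      - 4 * a * c^3 * z^4"
    using assms(1) by (simp add: quartic_points_def Let_def a_def c_def)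
  also have "\<dots> = (a * z^2 + c)^4 * y^2 - 4 * a * c * D^2"
    unfolding D_def by algebra
  finally have v2: "v^2 = (a * z^2 + c)^4 * y^2 - 4 * a * c * D^2" .
  have "(v / D)^2 = (a * z^2 + c)^4 * y^2 / D^2 - 4 * a * c"
    using D0 by (simp add: v2 power_divide diff_divide_distrib)
  also have "\<dots> = ((a * z^2 + c)^2 * y / D)^2 - 4 * a * c"
    by (simp add: power_divide power_mult_distrib flip: power_mult)
  finally show ?thesis
    unfolding den t a_def c_def .
qed

lemma infinite_nontrivial_solutions_of_square_discriminants:
  assumes A: "A \<noteq> 0" and C: "C \<noteq> 0" and z: "z \<noteq> 0" and fz: "fAC A C z \<noteq> 0"
    and inf: "infinite {y. \<exists>d. d^2 = ((fAC A C z)^2 / fAC A C y)^2 - 4 * of_int A * of_int C}"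
      (is "infinite ?Y")
  shows "infinite (nontrivial_solutions A C)"
proof -
  let ?f = "fAC A C"
  define Bad where "Bad = {y. ?f y \<in> {0, ?f z, - ?f z}}"
  have "Bad = {y. ?f y = 0} \<union> {y. ?f y = ?f z} \<union> {y. ?f y = - ?f z}"
    unfolding Bad_def by blast
  then have "finite Bad" using finite_fAC_fiber[OF A] by simp
  then have infY: "infinite (?Y - Bad)" using inf by simp
  define h where "h = (\<lambda>y. (SOME x. x \<noteq> 0 \<and> ?f x = ?f z^2 / ?f y, y, z))"
  have "h y \<in> nontrivial_solutions A C" if "y \<in> ?Y - Bad" for y
  proof -
    from that obtain d where "d^2 = (?f z^2 / ?f y)^2 - 4 * of_int A * of_int C" by blast
    from fAC_root[OF A C this]
    have "\<exists>x. x \<noteq> 0 \<and> ?f x = ?f z^2 / ?f y" by blast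
    then have "fst (h y) \<noteq> 0 \<and> ?f (fst (h y)) = ?f z^2 / ?f y"
      unfolding h_def fst_conv by (rule someI_ex)
    moreover have bad: "?f y \<notin> {0, ?f z, - ?f z}" using that by (simp add: Bad_def)
    moreover from bad have "y \<noteq> 0" by auto
    ultimately show ?thesis
      using nontrivial_solutionI[OF _ _ z fz] by (simp add: h_def)
  qed
  then have "h ` (?Y - Bad) \<subseteq> nontrivial_solutions A C" by blast
  moreover have "inj_on h (?Y - Bad)" by (rule inj_onI) (simp add: h_def)
  then have "infinite (h ` (?Y - Bad))" using infY by (simp add: finite_image_iff)
  ultimately show ?thesis by (rule infinite_super)
qed

lemma infinite_nontrivial_solutions_nondegenerate:
  assumes A: "A \<noteq> 0" and C: "C \<noteq> 0" and z: "z \<noteq> 0" and fz: "fAC A C z \<noteq> 0"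
    and inf: "infinite (quartic_points A C z)"
  shows "infinite (nontrivial_solutions A C)"
proof (rule infinite_nontrivial_solutions_of_square_discriminants[OF A C z fz])
  let ?f = "fAC A C"
  have "finite {v. (y, v) \<in> quartic_points A C z}" for y
    by (simp add: quartic_points_def Let_def finite_square_roots)
  with inf have "infinite (fst ` quartic_points A C z - {y. ?f y = 0})"
    using finite_fAC_fiber[OF A] by (simp add: infinite_fst_image)
  moreover have "fst ` quartic_points A C z - {y. ?f y = 0}
      \<subseteq> {y. \<exists>d. d^2 = (?f z^2 / ?f y)^2 - 4 * of_int A * of_int C}"
    using quartic_points_discriminant[OF _ _ z] by force
  ultimately show "infinite {y. \<exists>d. d^2 = (?f z^2 / ?f y)^2 - 4 * of_int A * of_int C}"
    using finite_subset by blast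
qed

lemma fAC_degenerate:
  assumes "fAC A C z = 0" and "z \<noteq> 0"
  shows "fAC A C (z * t) = of_int A * z * fAC 1 (-1) t"
proof (cases "t = 0")
  case False
  have "of_int C = - of_int A * z^2"
    using assms by (simp add: fAC_def field_simps power2_eq_square)
  with False assms(2) show ?thesis by (simp add: fAC_def field_simps power2_eq_square)
qed simp

lemma nontrivial_solutions_degenerate_scale:
  assumes "A \<noteq> 0" and "fAC A C z = 0" and "z \<noteq> 0"
    and "(x, y, w) \<in> nontrivial_solutions 1 (-1)"
  shows "(z * x, z * y, z * w) \<in> nontrivial_solutions A C"
proof -
  define k where "k = of_int A * z"
  have "k \<noteq> 0" using assms(1,3) by (simp add: k_def)
  moreover have "fAC A C (z * t) = k * fAC 1 (-1) t" for t
    using fAC_degenerate[OF assms(2,3)] by (simp add: k_def)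
  ultimately show ?thesis
    using assms(3,4) by (auto simp: nontrivial_solutions_def power2_eq_square algebra_simps)
qed

lemma infinite_nontrivial_solutions_degenerate:
  assumes "A \<noteq> 0" and "fAC A C z = 0" and "z \<noteq> 0"
    and inf: "infinite (nontrivial_solutions 1 (-1))"
  shows "infinite (nontrivial_solutions A C)"
proof -
  define h where "h = (\<lambda>(x, y, w). (z * x, z * y, z * w :: rat))"
  have "h ` nontrivial_solutions 1 (-1) \<subseteq> nontrivial_solutions A C"
    using nontrivial_solutions_degenerate_scale[OF assms(1-3)] by (auto simp: h_def)
  moreover have "inj h" using assms(3) by (auto intro!: injI simp: h_def)
  then have "infinite (h ` nontrivial_solutions 1 (-1))"
    using inf by (simp add: finite_image_iff inj_on_subset)
  ultimately show ?thesis by (rule infinite_super)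
qed

lemma inverse_difference_quartic_discriminant:
  fixes s u R :: rat
  assumes R: "R^2 = 4 * u^4 + (s^4 - 8) * u^2 + 4" and "u \<noteq> 0" and "fAC 1 (-1) u \<noteq> 0"
  shows "(R / (u * fAC 1 (-1) u))^2 = (s^2 / fAC 1 (-1) u)^2 + 4"
proof -
  define e where "e = u^2 - 1"
  have ue: "u * fAC 1 (-1) u = e"
    using assms(2) by (simp add: fAC_def e_def field_simps power2_eq_square)
  then have e: "e \<noteq> 0" using assms(2,3) by auto
  have t: "s^2 / fAC 1 (-1) u = s^2 * u / e" using assms(2) e ue[symmetric] by (simp add: field_simps)
  have "R^2 = (s^2 * u)^2 + 4 * e^2"
    unfolding R e_def by (simp add: algebra_simps power2_eq_square power4_eq_xxxx)
  with e show ?thesis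
    unfolding ue t by (simp add: power_divide add_divide_distrib)
qed

lemma infinite_nontrivial_solutions_inverse_difference_of_quartic:
  fixes w :: rat
  assumes "w \<noteq> 0" and "fAC 1 (-1) w \<noteq> 0"
    and inf: "infinite {(u, R). R^2 = 4 * u^4 + ((fAC 1 (-1) w)^4 - 8) * u^2 + 4}"
      (is "infinite ?S")
  shows "infinite (nontrivial_solutions 1 (-1))"
proof (rule infinite_nontrivial_solutions_of_square_discriminants[OF _ _ assms(1,2)])
  let ?g = "fAC 1 (-1)"
  have "finite {v. (u, v) \<in> ?S}" for u by (simp add: finite_square_roots)
  with inf have "infinite (fst ` ?S - {u. ?g u = 0})"
    using finite_fAC_fiber[of 1 "-1"] by (simp add: infinite_fst_image)
  moreover have "fst ` ?S - {u. ?g u = 0}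
      \<subseteq> {u. \<exists>d. d^2 = (?g w^2 / ?g u)^2 - 4 * of_int 1 * of_int (-1)}"
  proof
    fix u assume "u \<in> fst ` ?S - {u. ?g u = 0}"
    then obtain R where R: "R^2 = 4 * u^4 + (?g w^4 - 8) * u^2 + 4" and g: "?g u \<noteq> 0"
      by force
    then have "u \<noteq> 0" by auto
    from inverse_difference_quartic_discriminant[OF R this g]
    show "u \<in> {u. \<exists>d. d^2 = (?g w^2 / ?g u)^2 - 4 * of_int 1 * of_int (-1)}" by auto
  qed
  ultimately show "infinite {u. \<exists>d. d^2 = (?g w^2 / ?g u)^2 - 4 * of_int 1 * of_int (-1)}"
    using finite_subset by blast
qed simp_all

lemma tangent_doubling:
  fixes b c d W x :: "'a :: field_char_0"
  assumes W: "W^2 = x^3 + b * x^2 + c * x + d" and "W \<noteq> 0"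
  defines "l \<equiv> (3 * x^2 + 2 * b * x + c) / (2 * W)"
  defines "x' \<equiv> l^2 - b - 2 * x"
  shows "(W + l * (x' - x))^2 = x'^3 + b * x'^2 + c * x' + d"
proof -
  have lW: "2 * l * W = 3 * x^2 + 2 * b * x + c" using assms(2) by (simp add: l_def)
  have "x'^3 + b * x'^2 + c * x' + d - (W + l * (x' - x))^2
      = (x^3 + b * x^2 + c * x + d - W^2) + (3 * x^2 + 2 * b * x + c - 2 * l * W) * (x' - x)
        + (x' - x)^2 * (x' - (l^2 - b - 2 * x))"
    by algebra
  then show ?thesis using W lW by (simp add: x'_def)
qed

text \<open>\<open>(40/21)\<^sup>4 - 8 = 4 ecD / ecK\<close>, where \<open>40/21 = 7/3 - 3/7\<close>.\<close>

definition ecK :: int where "ecK = 21^4"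
definition ecD :: int where "ecD = 251038"

definition ec_rhs :: "rat \<Rightarrow> rat" where
  "ec_rhs Z = (Z - 2 * of_int ecK) * (Z + 2 * of_int ecK) * (Z + of_int ecD)"

definition ec_dbl :: "rat \<Rightarrow> rat" where
  "ec_dbl Z = (3 * Z^2 + 2 * of_int ecD * Z - 4 * (of_int ecK)^2)^2 / (4 * ec_rhs Z)
     - of_int ecD - 2 * Z"

lemma ec_dbl_on_curve:
  assumes W: "W^2 = ec_rhs Z" and "W \<noteq> 0"
  shows "\<exists>W'. W'^2 = ec_rhs (ec_dbl Z)"
proof -
  let ?b = "of_int ecD :: rat" and ?c = "- 4 * (of_int ecK)^2 :: rat"
  let ?d = "- 4 * (of_int ecK)^2 * of_int ecD :: rat"
  have cubic: "ec_rhs X = X^3 + ?b * X^2 + ?c * X + ?d" for X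
    unfolding ec_rhs_def by algebra
  define l where "l = (3 * Z^2 + 2 * ?b * Z + ?c) / (2 * W)"
  have "ec_dbl Z = l^2 - ?b - 2 * Z"
    using assms(2) unfolding ec_dbl_def l_def W[symmetric] by (simp add: power_divide algebra_simps)
  with tangent_doubling[OF W[unfolded cubic] assms(2)] show ?thesis
    unfolding cubic l_def by metis
qed

definition odd_over_pow4 :: "nat \<Rightarrow> rat \<Rightarrow> bool" where
  "odd_over_pow4 m Z \<longleftrightarrow> (\<exists>a b :: int. odd a \<and> odd b \<and> Z = of_int a / (4^m * of_int b))"

lemma odd_over_pow4_not_int:
  assumes "odd_over_pow4 m Z" and "m \<ge> 1"
  shows "Z \<noteq> of_int n"
proof
  assume Zn: "Z = of_int n"
  obtain a b :: int where ab: "odd a" "odd b" "Z = of_int a / (4^m * of_int b)"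
    using assms(1) odd_over_pow4_def by auto
  have "(of_int b :: rat) \<noteq> 0" using ab(2) by auto
  then have "of_int a = (of_int (n * 4^m * b) :: rat)" using ab(3) Zn by (simp add: field_simps)
  then have "a = n * 4^m * b" by (simp only: of_int_eq_iff)
  moreover have "even (n * 4^m * b)" using assms(2) by simp
  ultimately show False using ab(1) by simp
qed

lemma odd_over_pow4_unique:
  assumes "odd_over_pow4 m Z" and "odd_over_pow4 m' Z"
  shows "m = m'"
proof (rule ccontr)
  assume "m \<noteq> m'"
  then consider "m < m'" | "m' < m" by linarith
  moreover have "n < n' \<Longrightarrow> odd_over_pow4 n Z \<Longrightarrow> odd_over_pow4 n' Z \<Longrightarrow> False" for n n'
  proof -
    assume "n < n'" "odd_over_pow4 n Z" "odd_over_pow4 n' Z"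
    then obtain a b a' b' :: int where ab: "odd a" "odd b" "Z = of_int a / (4^n * of_int b)"
      and ab': "odd a'" "odd b'" "Z = of_int a' / (4^n' * of_int b')"
      unfolding odd_over_pow4_def by blast
    have "(of_int b :: rat) \<noteq> 0" "(of_int b' :: rat) \<noteq> 0" using ab(2) ab'(2) by auto
    then have "(of_int (a * 4^n' * b') :: rat) = of_int (a' * 4^n * b)"
      using ab(3) ab'(3) by (simp add: field_simps)
    then have "a * 4^n' * b' = a' * 4^n * b" by (simp only: of_int_eq_iff)
    moreover have "(4::int)^n' = 4^n * 4^(n' - n)"
      using \<open>n < n'\<close> by (simp flip: power_add)
    ultimately have "a * b' * 4^(n' - n) = a' * b" by (simp add: algebra_simps)
    moreover have "even (a * b' * 4^(n' - n))" using \<open>n < n'\<close> by simp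
    ultimately show False using ab'(1) ab(2) by simp
  qed
  ultimately show False using assms by metis
qed

lemma ec_rhs_nonzero:
  assumes "odd_over_pow4 m Z" and "m \<ge> 1"
  shows "ec_rhs Z \<noteq> 0" and "Z + of_int ecD \<noteq> 0"
proof -
  have "Z \<noteq> of_int (2 * ecK)" "Z \<noteq> of_int (- 2 * ecK)" "Z \<noteq> of_int (- ecD)"
    using odd_over_pow4_not_int[OF assms] by blast+
  then have "Z - 2 * of_int ecK \<noteq> 0" "Z + 2 * of_int ecK \<noteq> 0" "Z + of_int ecD \<noteq> 0"
    by (auto simp: algebra_simps)
  then show "ec_rhs Z \<noteq> 0" "Z + of_int ecD \<noteq> 0" unfolding ec_rhs_def by simp_all
qed

lemma ec_dbl_odd_over_pow4:
  assumes "odd_over_pow4 m Z" and "m \<ge> 1"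
  shows "odd_over_pow4 (Suc m) (ec_dbl Z)"
proof -
  obtain a b :: int where ab: "odd a" "odd b" "Z = of_int a / (4^m * of_int b)"
    using assms(1) odd_over_pow4_def by auto
  define t :: int where "t = 4^m"
  have "even t" using assms(2) by (simp add: t_def)
  define P where "P = 3 * a^2 + t * (2 * ecD * a * b - 4 * ecK^2 * t * b^2)"
  define Q where "Q = a^3 + t * (ecD * a^2 * b - 4 * ecK^2 * a * t * b^2 - 4 * ecK^2 * ecD * t^2 * b^3)"
  have "odd P" "odd Q" unfolding P_def Q_def using ab(1) \<open>even t\<close> by simp_all
  have t0: "(of_int t :: rat) \<noteq> 0" and b0: "(of_int b :: rat) \<noteq> 0"
    and Q0: "(of_int Q :: rat) \<noteq> 0"
    using ab(2) \<open>odd Q\<close> by (auto simp: t_def)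
  have Z: "Z = of_int a / (of_int t * of_int b)" using ab(3) by (simp add: t_def)
  have rhs: "ec_rhs Z = of_int Q / (of_int t * of_int b)^3"
    unfolding ec_rhs_def Z Q_def using t0 b0
    by (simp add: field_simps power2_eq_square power3_eq_cube)
  have slope: "3 * Z^2 + 2 * of_int ecD * Z - 4 * (of_int ecK)^2 = of_int P / (of_int t * of_int b)^2"
    unfolding Z P_def using t0 b0 by (simp add: field_simps power2_eq_square)
  have dbl_quotient: "(p / q^2)^2 / (4 * (r / q^3)) - d - 2 * (x / q)
      = (p^2 - 4 * r * (d * q + 2 * x)) / (4 * q * r)"
    if "q \<noteq> 0" "r \<noteq> 0" for p r q d x :: rat
    using that by (simp add: field_simps power2_eq_square power3_eq_cube)
  have "ec_dbl Z = of_int (P^2 - 4 * Q * (ecD * t * b + 2 * a)) / (4^Suc m * of_int (b * Q))"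
    unfolding ec_dbl_def slope rhs
    by (subst Z, subst dbl_quotient) (use t0 b0 Q0 in \<open>auto simp: t_def algebra_simps\<close>)
  moreover have "odd (P^2 - 4 * Q * (ecD * t * b + 2 * a))" "odd (b * Q)"
    using \<open>odd P\<close> \<open>odd Q\<close> ab(2) by simp_all
  ultimately show ?thesis unfolding odd_over_pow4_def by blast
qed

definition ec_base :: rat where "ec_base = 53659701697 / 133956"

definition ec_seq :: "nat \<Rightarrow> rat" where "ec_seq n = (ec_dbl ^^ n) ec_base"

lemma ec_seq_on_curve: "odd_over_pow4 (Suc n) (ec_seq n) \<and> (\<exists>W. W^2 = ec_rhs (ec_seq n))"
proof (induction n)
  case 0
  have "odd_over_pow4 1 ec_base"
    unfolding odd_over_pow4_def ec_base_def by (rule exI[of _ 53659701697], rule exI[of _ 33489]) simp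
  moreover have "(3789976373494325 / 49027896)^2 = ec_rhs ec_base"
    by (simp add: ec_rhs_def ec_base_def ecK_def ecD_def power2_eq_square)
  ultimately show ?case by (auto simp: ec_seq_def)
next
  case (Suc n)
  then obtain W where W: "W^2 = ec_rhs (ec_seq n)" and odd: "odd_over_pow4 (Suc n) (ec_seq n)"
    by blast
  then have "W \<noteq> 0" using ec_rhs_nonzero(1)[OF odd] by auto
  then have "\<exists>W'. W'^2 = ec_rhs (ec_dbl (ec_seq n))" using W by (rule ec_dbl_on_curve[rotated])
  moreover have "odd_over_pow4 (Suc (Suc n)) (ec_dbl (ec_seq n))"
    using ec_dbl_odd_over_pow4[OF odd] by simp
  ultimately show ?case by (simp add: ec_seq_def)
qed

lemma inj_ec_seq: "inj ec_seq"
  by (rule injI) (metis ec_seq_on_curve odd_over_pow4_unique Suc_inject)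

text \<open>
  As \<open>882\<^sup>2 = 4 ecK\<close>, this is a birational map from the cubic to the quartic, with inverse
  \<open>Z = ecK (R + 2u\<^sup>2)\<close>, \<open>W = 882 u (Z + ecD)\<close>.
\<close>

lemma ec_to_quartic:
  assumes W: "W^2 = ec_rhs Z" and ZD: "Z + of_int ecD \<noteq> 0"
  defines "u \<equiv> W / (882 * (Z + of_int ecD))"
  shows "(Z / of_int ecK - 2 * u^2)^2 = 4 * u^4 + (4 * of_int ecD / of_int ecK) * u^2 + 4"
proof -
  let ?K = "of_int ecK :: rat" and ?D = "of_int ecD :: rat"
  have K0: "?K \<noteq> 0" by (simp add: ecK_def)
  define e where "e = 4 * ?K * (Z + ?D)"
  have e0: "e \<noteq> 0" using K0 ZD by (simp add: e_def)
  have "(882 * (Z + ?D))^2 = e * (Z + ?D)"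
    unfolding power_mult_distrib e_def by (simp add: ecK_def power2_eq_square)
  moreover have "W^2 = (Z^2 - 4 * ?K^2) * (Z + ?D)"
    unfolding W ec_rhs_def by (simp add: algebra_simps power2_eq_square)
  ultimately have "u^2 = (Z^2 - 4 * ?K^2) / e"
    using ZD unfolding u_def power_divide by simp
  then have u2: "e * u^2 = Z^2 - 4 * ?K^2" using e0 by simp
  have "(Z / ?K - 2 * u^2)^2 - (4 * u^4 + (4 * ?D / ?K) * u^2 + 4)
      = (Z^2 - 4 * ?K^2 - e * u^2) / ?K^2"
    using K0 unfolding e_def by (simp add: field_simps power2_eq_square power4_eq_xxxx)
  with u2 show ?thesis by simp
qed

lemma infinite_ec_quartic_points:
  "infinite {(u, R). R^2 = 4 * u^4 + (4 * of_int ecD / of_int ecK) * u^2 + (4 :: rat)}"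
proof -
  define S where "S = {(Z, W). W^2 = ec_rhs Z \<and> Z + of_int ecD \<noteq> 0}"
  define u where "u = (\<lambda>Z W :: rat. W / (882 * (Z + of_int ecD)))"
  define h where "h = (\<lambda>(Z, W). (u Z W, Z / of_int ecK - 2 * (u Z W)^2))"
  have "range ec_seq \<subseteq> fst ` S"
  proof
    fix Z assume "Z \<in> range ec_seq"
    then obtain n where Z: "Z = ec_seq n" by blast
    with ec_seq_on_curve[of n] obtain W where "W^2 = ec_rhs Z" and "odd_over_pow4 (Suc n) Z"
      by blast
    then have "(Z, W) \<in> S" using ec_rhs_nonzero(2) by (simp add: S_def)
    then show "Z \<in> fst ` S" by force
  qed
  moreover have "infinite (range ec_seq)" using inj_ec_seq by (simp add: finite_image_iff)
  ultimately have "infinite S" using finite_surj by blast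
  moreover have "inj_on h S"
  proof (rule inj_onI, clarify)
    fix Z W Z' W' assume S: "(Z, W) \<in> S" "(Z', W') \<in> S" and "h (Z, W) = h (Z', W')"
    then have uu: "u Z W = u Z' W'" and "Z / of_int ecK = Z' / of_int ecK"
      by (auto simp: h_def)
    then have "Z = Z'" by (simp add: ecK_def)
    with uu S show "Z = Z' \<and> W = W'" by (simp add: S_def u_def)
  qed
  ultimately have "infinite (h ` S)" by (simp add: finite_image_iff)
  moreover have "h p \<in> {(u, R). R^2 = 4 * u^4 + (4 * of_int ecD / of_int ecK) * u^2 + 4}"
    if "p \<in> S" for p
    using that ec_to_quartic by (auto simp: S_def h_def u_def)
  then have "h ` S \<subseteq> {(u, R). R^2 = 4 * u^4 + (4 * of_int ecD / of_int ecK) * u^2 + 4}"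
    by (rule image_subsetI)
  ultimately show ?thesis by (rule infinite_super[rotated])
qed

lemma infinite_nontrivial_solutions_inverse_difference: "infinite (nontrivial_solutions 1 (-1))"
proof (rule infinite_nontrivial_solutions_inverse_difference_of_quartic)
  have g: "fAC 1 (-1) (7/3) = 40/21" by (simp add: fAC_def)
  have "(40/21)^4 - 8 = 4 * of_int ecD / (of_int ecK :: rat)"
    by (simp add: ecD_def ecK_def power_divide)
  then show "infinite {(u, R). R^2 = 4 * u^4 + ((fAC 1 (-1) (7/3))^4 - 8) * u^2 + 4}"
    unfolding g using infinite_ec_quartic_points by simp
qed (simp_all add: fAC_def)

theorem theorem1p4:
  fixes A C :: int and z :: rat
  assumes "A \<noteq> 0" and "C \<noteq> 0" and "z \<noteq> 0"
    and "infinite (quartic_points A C z)"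
  shows "infinite (nontrivial_solutions A C)"
proof (cases "fAC A C z = 0")
  case True
  show ?thesis
    using infinite_nontrivial_solutions_degenerate[OF assms(1) True assms(3)]
      infinite_nontrivial_solutions_inverse_difference .
next
  case False
  with assms show ?thesis by (intro infinite_nontrivial_solutions_nondegenerate)
qed

end
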